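(* Let $\varepsilon\in(0,1)$, $\rho\in\mathcal{D}$, and $X$ a Hermitian operator with $\operatorname{tr}[X]=1$. Then $D_{\min,\varepsilon}(\rho\|X)=-\log(1-\varepsilon)$ if and only if $\rho=X$.
   Context: $\mathcal{D}$ is the set of density operators on a finite-dimensional Hilbert space. For $\rho\in\mathcal{D}$ and Hermitian $X$, $D_{\min,\varepsilon}(\rho\|X)=-\log\alpha$ where $\alpha=\min\{\operatorname{tr}[EX]:0\le E\le I,\ \operatorname{tr}[\rho(I-E)]\le\varepsilon\}$, with the convention that $D_{\min,\varepsilon}(\rho\|X)=+\infty$ if $\alpha\le0$. *)

theory Defs
  imports "HOL-Analysis.Analysis"
begin

definition conj_transpose :: "complex^'n^'n \<Rightarrow> complex^'n^'n" where
  "conj_transpose A = (\<chi> i j. cnj (A $ j $ i))"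

definition hermitian :: "complex^'n^'n \<Rightarrow> bool" where
  "hermitian A \<longleftrightarrow> conj_transpose A = A"

definition psd :: "complex^'n::finite^'n \<Rightarrow> bool" where
  "psd A \<longleftrightarrow> hermitian A \<and>
     (\<forall>v :: complex^'n. 0 \<le> Re (\<Sum>i\<in>UNIV. cnj (v $ i) * (A *v v) $ i))"

definition density :: "complex^'n::finite^'n \<Rightarrow> bool" where
  "density \<rho> \<longleftrightarrow> psd \<rho> \<and> trace \<rho> = 1"

definition feasible_test :: "real \<Rightarrow> complex^'n::finite^'n \<Rightarrow> complex^'n^'n \<Rightarrow> bool" where
  "feasible_test \<epsilon> \<rho> E \<longleftrightarrow> psd E \<and> psd (mat 1 - E) \<and>
     Re (trace (\<rho> ** (mat 1 - E))) \<le> \<epsilon>"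

text \<open>alpha = min { tr[E X] : E feasible } (trace is real for Hermitian E, X;
  the infimum is attained since the feasible set is compact and nonempty).\<close>
definition alpha_min :: "real \<Rightarrow> complex^'n::finite^'n \<Rightarrow> complex^'n^'n \<Rightarrow> real" where
  "alpha_min \<epsilon> \<rho> X = Inf {Re (trace (E ** X)) | E. feasible_test \<epsilon> \<rho> E}"

definition D_min :: "real \<Rightarrow> complex^'n::finite^'n \<Rightarrow> complex^'n^'n \<Rightarrow> ereal" where
  "D_min \<epsilon> \<rho> X = (let \<alpha> = alpha_min \<epsilon> \<rho> X in
     if \<alpha> \<le> 0 then \<infinity> else ereal (- ln \<alpha>))"

end

(*
  The test E = (1 - eps) I is always feasible, with value tr[E X] = 1 - eps.
  If rho = X, no feasible test does better, since tr[E rho] = 1 - tr[rho (I - E)] >= 1 - eps.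
  If rho ~= X, put D = rho - X and H = D - Re tr[rho D] I. Then tr[rho H] = 0, so
  E = (1 - eps) I + t H stays feasible for all small t > 0, while
  tr[E X] = 1 - eps - t tr[D^2] < 1 - eps; hence alpha < 1 - eps.
*)

theory Submission
  imports Defs
begin

lemma Re_cnj_mult_self: "Re (cnj z * z) = (cmod z)\<^sup>2"
  by (simp add: cmod_power2 flip: power2_eq_square)

lemma norm_vec_square: "(norm v)\<^sup>2 = (\<Sum>i\<in>UNIV. (norm (v$i))\<^sup>2)"
  by (simp add: norm_vec_def L2_set_def sum_nonneg)

lemma hermitian_entry: "hermitian A \<Longrightarrow> A$j$i = cnj (A$i$j)"
  unfolding hermitian_def conj_transpose_def by (metis vec_lambda_beta)

lemma hermitian_add: "hermitian A \<Longrightarrow> hermitian B \<Longrightarrow> hermitian (A + B)"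
  by (simp add: hermitian_def conj_transpose_def vec_eq_iff)

lemma hermitian_diff: "hermitian A \<Longrightarrow> hermitian B \<Longrightarrow> hermitian (A - B)"
  by (simp add: hermitian_def conj_transpose_def vec_eq_iff)

lemma hermitian_scaleR: "hermitian A \<Longrightarrow> hermitian (t *\<^sub>R A)"
  by (simp add: hermitian_def conj_transpose_def vec_eq_iff)

lemma hermitian_id: "hermitian (mat 1)"
  by (simp add: hermitian_def conj_transpose_def vec_eq_iff mat_def)

definition quad_form :: "complex^'n::finite^'n \<Rightarrow> complex^'n \<Rightarrow> complex" where
  "quad_form M v = (\<Sum>i\<in>UNIV. cnj (v $ i) * (M *v v) $ i)"

lemma psd_iff_quad_form: "psd A \<longleftrightarrow> hermitian A \<and> (\<forall>v. 0 \<le> Re (quad_form A v))"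
  by (simp add: psd_def quad_form_def)

lemma quad_form_expand: "quad_form M v = (\<Sum>k\<in>UNIV. \<Sum>l\<in>UNIV. cnj (v$k) * M$k$l * v$l)"
  by (simp add: quad_form_def matrix_vector_mult_def sum_distrib_left mult.assoc)

lemma quad_form_add: "quad_form (A + B) v = quad_form A v + quad_form B v"
  by (simp add: quad_form_expand distrib_left distrib_right sum.distrib)

lemma quad_form_scaleR: "quad_form (t *\<^sub>R A) v = of_real t * quad_form A v"
  unfolding quad_form_expand vector_scaleR_component
  by (simp add: scaleR_conv_of_real sum_distrib_left mult_ac)

lemma Re_quad_form_id: "Re (quad_form (mat 1) v) = (norm v)\<^sup>2"
  unfolding quad_form_def matrix_vector_mul_lid Re_sum Re_cnj_mult_self norm_vec_square ..

lemma quad_form_bound: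
  "cmod (quad_form H v) \<le> (\<Sum>k\<in>UNIV. \<Sum>l\<in>UNIV. cmod (H$k$l)) * (norm v)\<^sup>2"
proof -
  have "cmod (quad_form H v) \<le> (\<Sum>k\<in>UNIV. \<Sum>l\<in>UNIV. cmod (cnj (v$k) * H$k$l * v$l))"
    unfolding quad_form_expand by (rule order_trans[OF norm_sum sum_mono]) (rule norm_sum)
  also have "\<dots> \<le> (\<Sum>k\<in>UNIV. \<Sum>l\<in>UNIV. cmod (H$k$l) * (norm v)\<^sup>2)"
  proof (intro sum_mono)
    fix k l
    have "cmod (v$k) * cmod (v$l) \<le> norm v * norm v"
      by (intro mult_mono Finite_Cartesian_Product.norm_nth_le) auto
    from mult_left_mono[OF this norm_ge_zero[of "H$k$l"]]
    show "cmod (cnj (v$k) * H$k$l * v$l) \<le> cmod (H$k$l) * (norm v)\<^sup>2"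
      by (simp add: norm_mult power2_eq_square mult_ac)
  qed
  finally show ?thesis by (simp add: sum_distrib_right)
qed

lemma matrix_vector_mult_axis: "(M *v axis j c) $ k = M$k$j * c"
  by (simp add: matrix_vector_mult_def axis_def if_distrib if_distribR cong: if_cong)

lemma sum_cnj_axis_mult: "(\<Sum>k\<in>UNIV. cnj (axis j c $ k) * w k) = cnj c * w j"
  by (simp add: axis_def if_distrib if_distribR cong: if_cong)

lemma quad_form_axis: "quad_form M (axis i 1) = M$i$i"
  using sum_cnj_axis_mult[of i 1] by (simp add: quad_form_def matrix_vector_mult_axis)

lemma quad_form_two_axes:
  "quad_form M (axis i 1 + axis j c) = M$i$i + M$i$j * c + cnj c * M$j$i + cnj c * c * M$j$j"
  by (simp add: quad_form_def matrix_vector_right_distrib matrix_vector_mult_axis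
      distrib_left distrib_right sum.distrib sum_cnj_axis_mult)

lemma psd_scaled_id_plus:
  fixes H :: "complex^'n::finite^'n"
  assumes "hermitian H" and "\<bar>t\<bar> * (\<Sum>k\<in>UNIV. \<Sum>l\<in>UNIV. cmod (H$k$l)) \<le> a"
  shows "psd (a *\<^sub>R mat 1 + t *\<^sub>R H)"
  unfolding psd_iff_quad_form
proof (intro conjI allI)
  show "hermitian (a *\<^sub>R mat 1 + t *\<^sub>R H)"
    using assms(1) by (intro hermitian_add hermitian_scaleR hermitian_id)
  fix v :: "complex^'n"
  have "\<bar>t * Re (quad_form H v)\<bar> \<le> \<bar>t\<bar> * ((\<Sum>k\<in>UNIV. \<Sum>l\<in>UNIV. cmod (H$k$l)) * (norm v)\<^sup>2)"
    unfolding abs_mult by (intro mult_left_mono order_trans[OF abs_Re_le_cmod quad_form_bound]) auto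
  also have "\<dots> \<le> a * (norm v)\<^sup>2"
    using assms(2) by (simp add: mult.assoc[symmetric] mult_right_mono)
  finally show "0 \<le> Re (quad_form (a *\<^sub>R mat 1 + t *\<^sub>R H) v)"
    by (simp add: quad_form_add quad_form_scaleR Re_quad_form_id)
qed

lemma psd_diag_nonneg: "psd P \<Longrightarrow> 0 \<le> Re (P$i$i)"
  using quad_form_axis[of P i] by (metis psd_iff_quad_form)

lemma psd_offdiag_bound:
  assumes "psd P"
  shows "2 * cmod (P$i$j) \<le> Re (P$i$i) + Re (P$j$j)"
proof -
  \<comment> \<open>a phase of modulus at most 1 that turns both cross terms into -|P_ij|\<close>
  define c where "c = - sgn (cnj (P$i$j))"
  have Pc: "P$i$j * c = - of_real (cmod (P$i$j))"
  proof (cases "P$i$j = 0")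
    case False
    have "P$i$j * cnj (P$i$j) = of_real (cmod (P$i$j)) * of_real (cmod (P$i$j))"
      by (simp flip: complex_norm_square of_real_mult power2_eq_square)
    then show ?thesis using False by (simp add: c_def sgn_eq)
  qed (simp add: c_def)
  have cP: "cnj c * P$j$i = - of_real (cmod (P$i$j))"
    using arg_cong[OF Pc, of cnj] hermitian_entry[of P i j] assms
    by (simp add: psd_iff_quad_form mult.commute)
  have cc: "Re (cnj c * c) \<le> 1"
    by (simp only: c_def Re_cnj_mult_self norm_minus_cancel norm_sgn) simp
  have "0 \<le> Re (quad_form P (axis i 1 + axis j c))"
    using assms by (simp add: psd_iff_quad_form)
  also have "\<dots> = Re (P$i$i) - 2 * cmod (P$i$j) + Re (cnj c * c) * Re (P$j$j)"
    by (simp add: quad_form_two_axes Pc cP)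
  also have "\<dots> \<le> Re (P$i$i) - 2 * cmod (P$i$j) + Re (P$j$j)"
    using mult_right_mono[OF cc psd_diag_nonneg[OF assms, of j]] by simp
  finally show ?thesis by simp
qed

lemma cmod_entry_le_one_if_psd_id_minus_psd:
  assumes "psd E" and "psd (mat 1 - E)"
  shows "cmod (E$i$j) \<le> 1"
proof -
  have "Re (E$k$k) \<le> 1" for k
    using psd_diag_nonneg[OF assms(2), of k] by (simp add: mat_def)
  from this[of i] this[of j] show ?thesis
    using psd_offdiag_bound[OF assms(1), of i j] by linarith
qed

lemma hermitian_trace_square:
  assumes "hermitian D"
  shows "Re (trace (D ** D)) = (norm D)\<^sup>2"
proof -
  have "Re (D$i$k * D$k$i) = (cmod (D$i$k))\<^sup>2" for i k
    using Re_cnj_mult_self[of "D$i$k"] hermitian_entry[OF assms, of i k] by (simp add: mult.commute)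
  then show ?thesis
    by (simp add: trace_def matrix_matrix_mult_def norm_vec_square)
qed

lemma trace_scaleR: "trace (t *\<^sub>R A) = of_real t * trace (A :: complex^'n::finite^'n)"
  unfolding trace_def vector_scaleR_component by (simp add: scaleR_conv_of_real sum_distrib_left)

lemma trace_mult_diff_right:
  "trace (A ** (B - C)) = trace (A ** B) - trace (A ** (C :: complex^'n::finite^'n))"
  by (simp add: trace_def matrix_matrix_mult_def right_diff_distrib sum_subtractf)

lemma trace_mult_scaled_id_plus:
  fixes A H :: "complex^'n::finite^'n"
  shows "trace (A ** (a *\<^sub>R mat 1 + t *\<^sub>R H)) = of_real a * trace A + of_real t * trace (A ** H)"
  by (simp add: matrix_add_ldistrib matrix_scalar_ac trace_add trace_scaleR flip: scalar_matrix_assoc)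

lemma Re_trace_mult_lower_bound:
  assumes "psd E" and "psd (mat 1 - E)"
  shows "- (\<Sum>i\<in>UNIV. \<Sum>k\<in>UNIV. cmod (X$k$i)) \<le> Re (trace (E ** X))"
proof -
  have "cmod (trace (E ** X)) \<le> (\<Sum>i\<in>UNIV. \<Sum>k\<in>UNIV. cmod (E$i$k * X$k$i))"
    unfolding trace_def matrix_matrix_mult_def by (rule order_trans[OF norm_sum sum_mono]) (simp add: norm_sum)
  also have "\<dots> \<le> (\<Sum>i\<in>UNIV. \<Sum>k\<in>UNIV. cmod (X$k$i))"
    using cmod_entry_le_one_if_psd_id_minus_psd[OF assms]
    by (intro sum_mono) (simp add: norm_mult mult_left_le_one_le)
  finally show ?thesis using abs_Re_le_cmod[of "trace (E ** X)"] by linarith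
qed

lemma feasible_test_scaled_id_plus:
  fixes \<rho> H :: "complex^'n::finite^'n"
  assumes "trace \<rho> = 1" and "hermitian H" and "Re (trace (\<rho> ** H)) = 0"
    and "\<bar>t\<bar> * (\<Sum>k\<in>UNIV. \<Sum>l\<in>UNIV. cmod (H$k$l)) \<le> min \<epsilon> (1 - \<epsilon>)"
  shows "feasible_test \<epsilon> \<rho> ((1 - \<epsilon>) *\<^sub>R mat 1 + t *\<^sub>R H)"
proof -
  have complement: "mat 1 - ((1 - \<epsilon>) *\<^sub>R mat 1 + t *\<^sub>R H) = \<epsilon> *\<^sub>R mat 1 + (- t) *\<^sub>R H"
    by (simp add: algebra_simps)
  show ?thesis
    unfolding feasible_test_def complement
  proof (intro conjI)
    show "psd ((1 - \<epsilon>) *\<^sub>R mat 1 + t *\<^sub>R H)" "psd (\<epsilon> *\<^sub>R mat 1 + (- t) *\<^sub>R H)"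
      using assms(2,4) by (intro psd_scaled_id_plus; simp)+
    show "Re (trace (\<rho> ** (\<epsilon> *\<^sub>R mat 1 + (- t) *\<^sub>R H))) \<le> \<epsilon>"
      unfolding trace_mult_scaled_id_plus using assms(1,3) by simp
  qed
qed

lemma alpha_min_le:
  assumes "feasible_test \<epsilon> \<rho> E"
  shows "alpha_min \<epsilon> \<rho> X \<le> Re (trace (E ** X))"
  unfolding alpha_min_def
proof (rule cInf_lower)
  show "bdd_below {Re (trace (E ** X)) | E. feasible_test \<epsilon> \<rho> E}"
    using Re_trace_mult_lower_bound[where X = X]
    by (auto simp: bdd_below_def feasible_test_def)
qed (use assms in blast)

lemma alpha_min_self:
  fixes \<rho> :: "complex^'n::finite^'n"
  assumes "0 \<le> \<epsilon>" and "\<epsilon> \<le> 1" and "trace \<rho> = 1"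
  shows "alpha_min \<epsilon> \<rho> \<rho> = 1 - \<epsilon>"
proof -
  have feasible: "feasible_test \<epsilon> \<rho> ((1 - \<epsilon>) *\<^sub>R mat 1)"
    using feasible_test_scaled_id_plus[of \<rho> 0 0 \<epsilon>] assms
    by (simp add: hermitian_def conj_transpose_def vec_eq_iff trace_def)
  have "1 - \<epsilon> \<le> Re (trace (E ** \<rho>))" if "feasible_test \<epsilon> \<rho> E" for E
    using that assms(3)
    by (simp add: feasible_test_def trace_mult_diff_right trace_mul_sym[of E])
  then have "1 - \<epsilon> \<le> alpha_min \<epsilon> \<rho> \<rho>"
    unfolding alpha_min_def using feasible by (intro cInf_greatest) auto
  moreover have "alpha_min \<epsilon> \<rho> \<rho> \<le> 1 - \<epsilon>"
    using alpha_min_le[OF feasible, of \<rho>] assms(3) by (simp add: trace_scaleR flip: scalar_matrix_assoc)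
  ultimately show ?thesis by simp
qed

lemma alpha_min_less:
  fixes \<rho> X :: "complex^'n::finite^'n"
  assumes "0 < \<epsilon>" and "\<epsilon> < 1" and "trace \<rho> = 1" and "trace X = 1"
    and "hermitian \<rho>" and "hermitian X" and "\<rho> \<noteq> X"
  shows "alpha_min \<epsilon> \<rho> X < 1 - \<epsilon>"
proof -
  define D where "D = \<rho> - X"
  define H where "H = D - Re (trace (\<rho> ** D)) *\<^sub>R mat 1"
  define K where "K = (\<Sum>k\<in>UNIV. \<Sum>l\<in>UNIV. cmod (H$k$l))"
  define m where "m = min \<epsilon> (1 - \<epsilon>)"
  define t where "t = m / (K + 1)"
  have "hermitian D"
    unfolding D_def using assms(5,6) by (rule hermitian_diff)
  then have "hermitian H"
    unfolding H_def by (intro hermitian_diff hermitian_scaleR hermitian_id)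
  have "0 \<le> K"
    unfolding K_def by (intro sum_nonneg) auto
  moreover have "0 < m"
    using assms(1,2) by (simp add: m_def)
  ultimately have "0 < t" and "\<bar>t\<bar> * K \<le> m"
    unfolding t_def by (auto simp: field_simps)
  have trace_H: "trace (A ** H) = trace (A ** D) - of_real (Re (trace (\<rho> ** D))) * trace A" for A
    by (simp add: H_def trace_mult_diff_right matrix_scalar_ac trace_scaleR flip: scalar_matrix_assoc)
  have "Re (trace (\<rho> ** H)) = 0"
    by (simp add: trace_H assms(3))
  have feasible: "feasible_test \<epsilon> \<rho> ((1 - \<epsilon>) *\<^sub>R mat 1 + t *\<^sub>R H)"
    using assms(3) \<open>hermitian H\<close> \<open>Re (trace (\<rho> ** H)) = 0\<close> \<open>\<bar>t\<bar> * K \<le> m\<close>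
    unfolding K_def m_def by (rule feasible_test_scaled_id_plus)
  have "trace (D ** D) = trace (\<rho> ** D) - trace (X ** D)"
    by (metis D_def trace_mul_sym trace_mult_diff_right)
  then have "Re (trace (X ** H)) = - Re (trace (D ** D))"
    by (simp add: trace_H assms(4))
  also have "\<dots> = - (norm D)\<^sup>2"
    by (simp add: hermitian_trace_square \<open>hermitian D\<close>)
  finally have trace_XH: "Re (trace (X ** H)) = - (norm D)\<^sup>2" .
  have "alpha_min \<epsilon> \<rho> X \<le> Re (trace (((1 - \<epsilon>) *\<^sub>R mat 1 + t *\<^sub>R H) ** X))"
    using feasible by (rule alpha_min_le)
  also have "\<dots> = (1 - \<epsilon>) - t * (norm D)\<^sup>2"
    by (simp add: trace_mul_sym[of _ X] trace_mult_scaled_id_plus trace_XH assms(4))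
  also have "\<dots> < 1 - \<epsilon>"
    using \<open>0 < t\<close> assms(7) by (simp add: D_def)
  finally show ?thesis .
qed

lemma D_min_eq_neg_ln_iff:
  assumes "\<epsilon> < 1"
  shows "D_min \<epsilon> \<rho> X = ereal (- ln (1 - \<epsilon>)) \<longleftrightarrow> alpha_min \<epsilon> \<rho> X = 1 - \<epsilon>"
  using assms by (auto simp: D_min_def Let_def)

theorem lemmaS1:
  fixes \<epsilon> :: real and \<rho> X :: "complex^'n::finite^'n"
  assumes "0 < \<epsilon>" and "\<epsilon> < 1"
    and "density \<rho>"
    and "hermitian X" and "trace X = 1"
  shows "D_min \<epsilon> \<rho> X = ereal (- ln (1 - \<epsilon>)) \<longleftrightarrow> \<rho> = X"
proof -
  from assms(3) have "hermitian \<rho>" and "trace \<rho> = 1"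
    by (auto simp: density_def psd_def)
  have "D_min \<epsilon> \<rho> X = ereal (- ln (1 - \<epsilon>)) \<longleftrightarrow> alpha_min \<epsilon> \<rho> X = 1 - \<epsilon>"
    using assms(2) by (rule D_min_eq_neg_ln_iff)
  also have "\<dots> \<longleftrightarrow> \<rho> = X"
  proof
    assume "alpha_min \<epsilon> \<rho> X = 1 - \<epsilon>"
    then show "\<rho> = X"
      using alpha_min_less[of \<epsilon> \<rho> X] assms \<open>hermitian \<rho>\<close> \<open>trace \<rho> = 1\<close> by fastforce
  next
    assume "\<rho> = X"
    then show "alpha_min \<epsilon> \<rho> X = 1 - \<epsilon>"
      using alpha_min_self[of \<epsilon> \<rho>] assms(1,2) \<open>trace \<rho> = 1\<close> by simp
  qed
  finally show ?thesis .
qed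

end
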